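(* Let $n$ be a non-negative integer and let $a,b$ be integers with $\gcd(a,b)=1$, $a+b\neq 0$ and $a+b\neq \pm 1$. For natural numbers $N$ put $B(N,2,a,b)=\sum_{k=0}^{N}\binom{N}{k}^2 a^{N-k}b^k$. Then $$\omega_{a+b}\big(B(2n,2,a,b)\big)=\omega_{a+b}\Big(\binom{2n}{n}\Big),\qquad \omega_{a+b}\big(B(2n+1,2,a,b)\big)=1+\omega_{a+b}\Big((2n+1)\binom{2n}{n}\Big).$$
   Context: For an integer $x$ with $x\neq 0$ and $x\neq\pm1$ and a nonzero integer $y$, $\omega_x(y)$ denotes the largest non-negative integer $e$ such that $x^e$ divides $y$ (when $x$ is a prime $p$ this is the $p$-adic valuation $v_p(y)$). *)

theory Defs
  imports "HOL-Computational_Algebra.Computational_Algebra"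
begin

definition omega :: "int \<Rightarrow> int \<Rightarrow> nat" where
  "omega x y = (if finite {e. x ^ e dvd y} then Max {e. x ^ e dvd y} else 0)"

definition B2 :: "nat \<Rightarrow> int \<Rightarrow> int \<Rightarrow> int" where
  "B2 N a b = (\<Sum>k=0..N. int (N choose k) ^ 2 * a ^ (N - k) * b ^ k)"

end

theory Submission
  imports Defs
begin

(*
  Vandermonde's identity rewrites B(N,2,a,b) as
    sum_i C(N,2i) C(2i,i) (a+b)^(N-2i) (ab)^i,
  and ab is coprime to a+b. For N = 2n+r with r in {0,1}, the last term is
  C(2n+r,r) C(2n,n) (a+b)^r (ab)^n, whose (a+b)-adic valuation is the claimed one.
  Every other term i = n-j is divisible by a strictly larger power of a+b:
  its coefficient times C(2j+r,r) C(2j,j) equals C(2n+r,r) C(2n,n) C(n,j)^2, and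
  no prime power q^(2j) divides C(2j+r,r) C(2j,j). Hence if (a+b)^E divides the
  latter product, (a+b)^(E-2j+1) already divides the coefficient, and the factor
  (a+b)^(2j+r) of the term more than compensates.
*)

(* Both sides equal (2i+l+r)! / (i! i! l! r!). *)
lemma choose_mult_rearrange:
  "((2*i+l+r) choose (i+l)) * ((i+l) choose i) * ((i+r) choose i)
     = ((2*i+l+r) choose (2*i)) * ((2*i) choose i) * ((l+r) choose l)"
proof -
  have "real (((2*i+l+r) choose (i+l)) * ((i+l) choose i) * ((i+r) choose i))
      = real (((2*i+l+r) choose (2*i)) * ((2*i) choose i) * ((l+r) choose l))"
    by (simp add: binomial_fact field_simps)
  then show ?thesis
    by (simp only: of_nat_eq_iff)
qed

lemma choose_square_eq_sum:
  assumes "k \<le> N"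
  shows "(N choose k)^2 = (\<Sum>i\<le>k. (N choose k) * (k choose i) * ((N - k) choose i))"
proof -
  have "(\<Sum>i\<le>k. ((N - k) choose i) * (k choose (k - i))) = (N - k + k) choose k"
    by (rule vandermonde)
  also have "\<dots> = N choose k"
    using assms by simp
  also have "(\<Sum>i\<le>k. ((N - k) choose i) * (k choose (k - i))) = (\<Sum>i\<le>k. (k choose i) * ((N - k) choose i))"
    by (intro sum.cong refl) (simp add: binomial_symmetric[symmetric])
  finally have "N choose k = (\<Sum>i\<le>k. (k choose i) * ((N - k) choose i))" ..
  then show ?thesis
    by (simp add: power2_eq_square sum_distrib_left mult.assoc)
qed

lemma sum_choose_squared_powers:
  fixes x y :: "'a::comm_semiring_1"
  shows "(\<Sum>k\<le>N. of_nat ((N choose k)^2) * x^(N - k) * y^k)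
       = (\<Sum>i\<le>N div 2. of_nat ((N choose (2*i)) * ((2*i) choose i)) * (x + y)^(N - 2*i) * (x*y)^i)"
proof -
  define f where "f = (\<lambda>(k, i). of_nat ((N choose k) * (k choose i) * ((N - k) choose i)) * x^(N - k) * y^k)"
  define g where "g = (\<lambda>(i, l). of_nat ((N choose (2*i)) * ((2*i) choose i) * ((N - 2*i) choose l))
                                 * x^(N - 2*i - l) * y^l * (x*y)^i)"
  have "(\<Sum>k\<le>N. of_nat ((N choose k)^2) * x^(N - k) * y^k) = (\<Sum>k\<le>N. \<Sum>i\<le>k. f (k, i))"
    by (intro sum.cong refl) (simp add: choose_square_eq_sum f_def sum_distrib_right)
  also have "\<dots> = sum f (SIGMA k:{..N}. {..k})"
    by (subst sum.Sigma) auto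
  also have "\<dots> = sum f {(k, i). i \<le> k \<and> k + i \<le> N}"
  proof (rule sum.mono_neutral_right)
    show "\<forall>p \<in> (SIGMA k:{..N}. {..k}) - {(k, i). i \<le> k \<and> k + i \<le> N}. f p = 0"
    proof
      fix p assume "p \<in> (SIGMA k:{..N}. {..k}) - {(k, i). i \<le> k \<and> k + i \<le> N}"
      then obtain k i where "p = (k, i)" and "N - k < i"
        by force
      then show "f p = 0"
        by (simp add: f_def binomial_eq_0)
    qed
  qed auto
  also have "\<dots> = sum g (SIGMA i:{..N div 2}. {..N - 2*i})"
  proof (rule sum.reindex_bij_witness[where j = "\<lambda>(k, i). (i, k - i)" and i = "\<lambda>(i, l). (i + l, i)"])
    fix p assume "p \<in> {(k, i). i \<le> k \<and> k + i \<le> N}"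
    then obtain i l r where p: "p = (i + l, i)" and N: "N = 2*i + l + r"
      by (auto dest!: le_Suc_ex)
    have "f (i + l, i) = of_nat ((N choose (2*i)) * ((2*i) choose i) * ((l + r) choose l)) * x^(i + r) * y^(i + l)"
      using choose_mult_rearrange[of i l r] by (simp add: f_def N add.commute add.left_commute del: of_nat_mult)
    also have "\<dots> = g (i, l)"
      by (simp add: g_def N power_add power_mult_distrib mult_ac)
    finally show "g (case p of (k, i) \<Rightarrow> (i, k - i)) = f p"
      by (simp add: p)
  qed auto
  also have "\<dots> = (\<Sum>i\<le>N div 2. \<Sum>l\<le>N - 2*i. g (i, l))"
    by (subst sum.Sigma) auto
  also have "\<dots> = (\<Sum>i\<le>N div 2. of_nat ((N choose (2*i)) * ((2*i) choose i)) * (x + y)^(N - 2*i) * (x*y)^i)"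
  proof (intro sum.cong refl)
    fix i
    have "(x + y)^(N - 2*i) = (\<Sum>l\<le>N - 2*i. of_nat ((N - 2*i) choose l) * y^l * x^(N - 2*i - l))"
      by (subst add.commute) (rule binomial_ring)
    then show "(\<Sum>l\<le>N - 2*i. g (i, l))
        = of_nat ((N choose (2*i)) * ((2*i) choose i)) * (x + y)^(N - 2*i) * (x*y)^i"
      by (simp add: g_def sum_distrib_left sum_distrib_right mult_ac)
  qed
  finally show ?thesis .
qed

(* Both sides equal (2i+2j+r)! / (i! i! j! j! r!). *)
lemma central_binomial_mult_rearrange:
  "((2*(i + j) + r) choose (2*i)) * ((2*i) choose i) * (((2*j + r) choose r) * ((2*j) choose j))
     = ((2*(i + j) + r) choose r) * ((2*(i + j)) choose (i + j)) * ((i + j) choose j)^2"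
proof -
  have "real (((2*(i + j) + r) choose (2*i)) * ((2*i) choose i) * (((2*j + r) choose r) * ((2*j) choose j)))
      = real (((2*(i + j) + r) choose r) * ((2*(i + j)) choose (i + j)) * ((i + j) choose j)^2)"
    by (simp add: binomial_fact field_simps power2_eq_square)
  then show ?thesis
    by (simp only: of_nat_eq_iff)
qed

lemma central_binomial_less_four_power:
  assumes "0 < j"
  shows "(2*j) choose j < 4^j"
proof -
  have "((2*j) choose j) + ((2*j) choose 0) = (\<Sum>k\<in>{0, j}. (2*j) choose k)"
    using assms by simp
  also have "\<dots> \<le> (\<Sum>k\<le>2*j. (2*j) choose k)"
    by (rule sum_mono2) auto
  also have "\<dots> = 4^j"
    by (simp add: choose_row_sum power_mult)
  finally show ?thesis
    by simp
qed

lemma odd_times_central_binomial_less_nine_power: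
  assumes "0 < j"
  shows "(2*j + 1) * ((2*j) choose j) < 9^j"
proof (cases "j = 1")
  case False
  with assms have "2 \<le> j"
    by simp
  then have "(2*j + 1) * 4^j \<le> (9::nat)^j"
  proof (induction j rule: dec_induct)
    case (step j)
    have "(2*Suc j + 1) * 4^Suc j \<le> 9 * ((2*j + 1) * (4::nat)^j)"
      using step.hyps by (simp add: algebra_simps)
    also have "\<dots> \<le> 9 * 9^j"
      using step.IH by simp
    finally show ?case
      by simp
  qed simp
  moreover have "(2*j + 1) * ((2*j) choose j) < (2*j + 1) * 4^j"
    using central_binomial_less_four_power[OF assms] by (intro mult_strict_left_mono) simp_all
  ultimately show ?thesis
    by linarith
qed simp

lemma prime_power_not_dvd_central_binomial:
  fixes q :: int
  assumes "prime q" "0 < j" "r \<le> 1"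
  shows "\<not> q^(2*j) dvd int (((2*j + r) choose r) * ((2*j) choose j))"
proof
  assume dvd: "q^(2*j) dvd int (((2*j + r) choose r) * ((2*j) choose j))"
  have "q \<ge> 2"
    using assms(1) prime_ge_2_int by blast
  have four: "int ((2*j) choose j) < 4^j"
    using central_binomial_less_four_power[OF assms(2)] by (simp flip: of_nat_less_iff)
  have nine: "int ((2*j + 1) * ((2*j) choose j)) < 9^j"
    using odd_times_central_binomial_less_nine_power[OF assms(2)]
    by (metis of_nat_less_iff of_nat_numeral of_nat_power)
  consider "r = 0" | "r = 1" "q = 2" | "r = 1" "q \<ge> 3"
    using assms(3) \<open>q \<ge> 2\<close> by force
  then show False
  proof cases
    case 1
    then have "q^(2*j) \<le> int ((2*j) choose j)"
      using dvd by (intro zdvd_imp_le) simp_all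
    moreover have "(2::int)^(2*j) \<le> q^(2*j)"
      using \<open>q \<ge> 2\<close> by (intro power_mono) simp_all
    ultimately show False
      using four by (simp add: power_mult)
  next
    case 2
    have "(2::int)^(2*j) dvd int (2*j + 1) * int ((2*j) choose j)"
      using dvd 2 by (simp add: algebra_simps)
    moreover have "coprime ((2::int)^(2*j)) (int (2*j + 1))"
      by simp
    ultimately have "(2::int)^(2*j) dvd int ((2*j) choose j)"
      using coprime_dvd_mult_right_iff by blast
    then have "(2::int)^(2*j) \<le> int ((2*j) choose j)"
      by (rule zdvd_imp_le) simp
    with four show False
      by (simp add: power_mult)
  next
    case 3
    with dvd have "q^(2*j) dvd int ((2*j + 1) * ((2*j) choose j))"
      by simp
    then have "q^(2*j) \<le> int ((2*j + 1) * ((2*j) choose j))"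
      by (rule zdvd_imp_le) (simp only: of_nat_0_less_iff, simp)
    moreover have "(3::int)^(2*j) \<le> q^(2*j)"
      using 3 by (intro power_mono) simp_all
    ultimately show False
      using nine by (simp add: power_mult)
  qed
qed

lemma power_dvd_cancel_factor:
  fixes m x d :: "'a::factorial_semiring"
  assumes dvd: "m ^ e dvd x * d"
    and "x \<noteq> 0" "d \<noteq> 0" "m \<noteq> 0"
    and small: "\<And>q. prime q \<Longrightarrow> \<not> q ^ Suc k dvd d"
  shows "m ^ (e - k) dvd x"
proof (rule multiplicity_le_imp_dvd)
  show "m ^ (e - k) \<noteq> 0"
    using \<open>m \<noteq> 0\<close> by simp
  fix q :: 'a
  assume q: "prime q"
  then have "prime_elem q"
    by simp
  have "multiplicity q d \<le> k"
    using small[OF q] multiplicity_dvd'[of "Suc k" q d] by (meson not_less_eq_eq)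
  moreover have "multiplicity q (m ^ e) \<le> multiplicity q (x * d)"
    using dvd assms(2,3) by (intro dvd_imp_multiplicity_le) simp_all
  then have "e * multiplicity q m \<le> multiplicity q x + multiplicity q d"
    using assms(2,3,4) \<open>prime_elem q\<close>
    by (simp add: prime_elem_multiplicity_power_distrib prime_elem_multiplicity_mult_distrib)
  ultimately have "(e - k) * multiplicity q m \<le> multiplicity q x"
  proof (cases "multiplicity q m = 0")
    case False
    then have "k \<le> k * multiplicity q m"
      by simp
    with \<open>multiplicity q d \<le> k\<close> \<open>e * multiplicity q m \<le> multiplicity q x + multiplicity q d\<close>
    show ?thesis
      unfolding diff_mult_distrib by linarith
  qed simp
  then show "multiplicity q (m ^ (e - k)) \<le> multiplicity q x"
    using \<open>m \<noteq> 0\<close> \<open>prime_elem q\<close> by (simp add: prime_elem_multiplicity_power_distrib)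
qed

lemma multiplicity_add_higher_power:
  fixes p x y :: "'a::{factorial_semiring, comm_ring_1}"
  assumes "x \<noteq> 0" "\<not> is_unit p" "p ^ Suc (multiplicity p x) dvd y"
  shows "x + y \<noteq> 0" and "multiplicity p (x + y) = multiplicity p x"
proof -
  have not_dvd: "\<not> p ^ Suc (multiplicity p x) dvd x"
    by (simp only: power_dvd_iff_le_multiplicity[OF assms(1,2)])
  then show "x + y \<noteq> 0"
    using assms(3) by (metis add.inverse_unique dvd_minus_iff)
  show "multiplicity p (x + y) = multiplicity p x"
  proof (rule multiplicity_eqI)
    have "p ^ multiplicity p x dvd y"
      using assms(3) by (rule dvd_trans[rotated]) (simp add: le_imp_power_dvd)
    then show "p ^ multiplicity p x dvd x + y"
      by (simp add: multiplicity_dvd)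
    show "\<not> p ^ Suc (multiplicity p x) dvd x + y"
      using not_dvd assms(3) by (simp add: dvd_add_left_iff)
  qed
qed

lemma multiplicity_mult_coprime:
  fixes p x c :: "'a::factorial_semiring_gcd"
  assumes "x \<noteq> 0" "\<not> is_unit p" "coprime p c"
  shows "multiplicity p (x * c) = multiplicity p x"
proof (rule multiplicity_eqI)
  show "p ^ multiplicity p x dvd x * c"
    by (simp add: multiplicity_dvd)
  have "coprime (p ^ Suc (multiplicity p x)) c"
    using assms(3) by simp
  then show "\<not> p ^ Suc (multiplicity p x) dvd x * c"
    by (simp only: coprime_dvd_mult_left_iff power_dvd_iff_le_multiplicity[OF assms(1,2)])
qed

lemma multiplicity_power_mult:
  fixes p x :: "'a::factorial_semiring"
  assumes "x \<noteq> 0" "\<not> is_unit p" "p \<noteq> 0"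
  shows "multiplicity p (p ^ r * x) = r + multiplicity p x"
  using assms by (induction r) (simp_all add: mult.assoc multiplicity_times_same)

lemma coprime_add_mult:
  fixes a b :: "'a::ring_gcd"
  assumes "coprime a b"
  shows "coprime (a + b) (a * b)"
  using assms by (metis coprime_iff_gcd_eq_1 coprime_mult_right_iff gcd_add1 gcd_add2 gcd.commute)

lemma B2_eq_sum_central_binomials:
  "B2 N a b = (\<Sum>i\<le>N div 2. int ((N choose (2*i)) * ((2*i) choose i)) * (a + b)^(N - 2*i) * (a*b)^i)"
  using sum_choose_squared_powers[of N a b] by (simp add: B2_def atLeast0AtMost)

lemma power_dvd_noncentral_term:
  fixes m :: int
  assumes "m \<noteq> 0" "r \<le> 1" "i < n"
  shows "m ^ Suc (r + multiplicity m (int (((2*n + r) choose r) * ((2*n) choose n))))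
           dvd int (((2*n + r) choose (2*i)) * ((2*i) choose i)) * m ^ (2*n + r - 2*i)"
proof -
  define E where "E = multiplicity m (int (((2*n + r) choose r) * ((2*n) choose n)))"
  obtain j where n: "n = i + j" and "0 < j"
    using assms(3) less_imp_add_positive by blast
  define e where "e = int (((2*n + r) choose (2*i)) * ((2*i) choose i))"
  define d where "d = int (((2*j + r) choose r) * ((2*j) choose j))"
  have "e * d = int (((2*n + r) choose r) * ((2*n) choose n)) * int ((n choose j)^2)"
    unfolding e_def d_def n of_nat_mult[symmetric] by (rule arg_cong[OF central_binomial_mult_rearrange])
  then have "m ^ E dvd e * d"
    unfolding E_def by (metis dvd_mult2 multiplicity_dvd)
  then have "m ^ (E - (2*j - 1)) dvd e"
  proof (rule power_dvd_cancel_factor)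
    show "e \<noteq> 0" "d \<noteq> 0" "m \<noteq> 0"
      using assms(1) n by (simp_all add: e_def d_def)
    show "\<not> q ^ Suc (2*j - 1) dvd d" if "prime q" for q
      using prime_power_not_dvd_central_binomial[OF that \<open>0 < j\<close> assms(2)] \<open>0 < j\<close>
      by (simp add: d_def)
  qed
  then have "m ^ (E - (2*j - 1)) * m ^ (2*j + r) dvd e * m ^ (2*n + r - 2*i)"
    by (simp add: n mult_dvd_mono)
  moreover have "m ^ Suc (r + E) dvd m ^ (E - (2*j - 1)) * m ^ (2*j + r)"
    unfolding power_add[symmetric] using \<open>0 < j\<close> by (intro le_imp_power_dvd) simp
  ultimately show ?thesis
    unfolding E_def e_def by (rule dvd_trans[rotated])
qed

lemma multiplicity_B2:
  fixes a b :: int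
  assumes "coprime a b" "a + b \<noteq> 0" "\<not> is_unit (a + b)" "r \<le> 1"
  shows "B2 (2*n + r) a b \<noteq> 0"
    and "multiplicity (a + b) (B2 (2*n + r) a b)
           = r + multiplicity (a + b) (int (((2*n + r) choose r) * ((2*n) choose n)))"
proof -
  define m where "m = a + b"
  define T where "T = int (((2*n + r) choose r) * ((2*n) choose n))"
  define t where "t = (\<lambda>i. int (((2*n + r) choose (2*i)) * ((2*i) choose i)) * m ^ (2*n + r - 2*i) * (a*b)^i)"
  have "B2 (2*n + r) a b = (\<Sum>i\<le>n. t i)"
    using assms(4) by (simp add: B2_eq_sum_central_binomials t_def m_def)
  also have "\<dots> = m^r * T * (a*b)^n + (\<Sum>i<n. t i)"
    by (simp add: lessThan_Suc_atMost[symmetric] t_def T_def binomial_symmetric[of r "2*n + r"])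
  finally have B2: "B2 (2*n + r) a b = m^r * T * (a*b)^n + (\<Sum>i<n. t i)" .
  have "T \<noteq> 0" "m \<noteq> 0" "\<not> is_unit m"
    using assms(2,3) by (simp_all add: T_def m_def)
  have "coprime m ((a*b)^n)"
    using coprime_add_mult[OF assms(1)] by (simp add: m_def)
  then have central: "multiplicity m (m^r * T * (a*b)^n) = r + multiplicity m T"
    using \<open>T \<noteq> 0\<close> \<open>m \<noteq> 0\<close> \<open>\<not> is_unit m\<close>
    by (simp add: multiplicity_mult_coprime multiplicity_power_mult)
  have "m ^ Suc (multiplicity m (m^r * T * (a*b)^n)) dvd (\<Sum>i<n. t i)"
  proof (rule dvd_sum)
    fix i assume "i \<in> {..<n}"
    then show "m ^ Suc (multiplicity m (m^r * T * (a*b)^n)) dvd t i"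
      using power_dvd_noncentral_term[OF \<open>m \<noteq> 0\<close> assms(4), of i n] central
      by (simp add: t_def T_def dvd_mult2)
  qed
  moreover have "m^r * T * (a*b)^n \<noteq> 0"
    using \<open>T \<noteq> 0\<close> \<open>m \<noteq> 0\<close> \<open>coprime m ((a*b)^n)\<close> \<open>\<not> is_unit m\<close> by auto
  ultimately show "B2 (2*n + r) a b \<noteq> 0"
    and "multiplicity (a + b) (B2 (2*n + r) a b) = r + multiplicity (a + b) T"
    unfolding B2 m_def[symmetric] central[symmetric]
    using \<open>\<not> is_unit m\<close> by (simp_all add: multiplicity_add_higher_power)
qed

lemma omega_eq_multiplicity: "omega x y = multiplicity x y"
  by (simp add: omega_def multiplicity_def)

theorem theorem1:
  fixes n :: nat and a b :: int
  assumes "gcd a b = 1" and "a + b \<noteq> 0" and "a + b \<noteq> 1" and "a + b \<noteq> -1"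
  shows "B2 (2*n) a b \<noteq> 0 \<and> B2 (2*n+1) a b \<noteq> 0
    \<and> omega (a + b) (B2 (2*n) a b) = omega (a + b) (int ((2*n) choose n))
    \<and> omega (a + b) (B2 (2*n+1) a b) = 1 + omega (a + b) (int (2*n+1) * int ((2*n) choose n))"
proof -
  have hyps: "coprime a b" "a + b \<noteq> 0" "\<not> is_unit (a + b)"
    using assms by (auto simp: coprime_iff_gcd_eq_1)
  show ?thesis
    using multiplicity_B2[OF hyps, of 0 n] multiplicity_B2[OF hyps, of 1 n]
    by (simp add: omega_eq_multiplicity distrib_right)
qed

end
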